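(* For every integer $n \ge 2$ and every weighted undirected graph $G=(V,w)$ on $n$ vertices, $\mathrm{cdim}(G) \le 2n-3$.
   Context: A weighted undirected graph $G=(V,w)$ consists of a finite vertex set $V$ and a weight function $w$ assigning a nonnegative real number to each unordered pair $\{x,y\}$ of distinct vertices (an "edge slot"). The edge set is $E=\{e : w(e)>0\}$, and $m=|E|$. For $\emptyset \ne X \subsetneq V$, $\Delta(X)$ denotes the set of edges of $E$ with exactly one endpoint in $X$; such a set is a cut with shores $X$ and $V\setminus X$, and its weight is $w(\Delta(X))=\sum_{e\in\Delta(X)} w(e)$. A minimum cut (mincut) is a cut of minimum weight; $\mathcal{M}(G)$ is the set of mincuts. For $S\subseteq E$, $\chi(S)\in\{0,1\}^m$ is its characteristic vector indexed by the edges in $E$. The cut dimension is $\mathrm{cdim}(G)=\dim\,\mathrm{span}\{\chi(S): S\in\mathcal{M}(G)\}$. *)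

theory Defs
  imports "HOL-Analysis.Analysis" "HOL-Library.Function_Algebras"
begin

text \<open>A weighted undirected graph is given by a finite vertex set V and a weight
  function w on unordered pairs (2-element sets) of vertices.  Only the values
  of w on edge slots {x,y} with x,y in V, x distinct from y, matter.\<close>

definition edge_slots :: "'a set \<Rightarrow> 'a set set" where
  "edge_slots V = {e. \<exists>x\<in>V. \<exists>y\<in>V. x \<noteq> y \<and> e = {x, y}}"

definition edges :: "'a set \<Rightarrow> ('a set \<Rightarrow> real) \<Rightarrow> 'a set set" where
  "edges V w = {e \<in> edge_slots V. w e > 0}"

definition cut_edges :: "'a set \<Rightarrow> ('a set \<Rightarrow> real) \<Rightarrow> 'a set \<Rightarrow> 'a set set" where
  "cut_edges V w X = {e \<in> edges V w. card (e \<inter> X) = 1}"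

definition cut_weight :: "'a set \<Rightarrow> ('a set \<Rightarrow> real) \<Rightarrow> 'a set \<Rightarrow> real" where
  "cut_weight V w X = (\<Sum>e\<in>cut_edges V w X. w e)"

definition is_shore :: "'a set \<Rightarrow> 'a set \<Rightarrow> bool" where
  "is_shore V X \<longleftrightarrow> X \<noteq> {} \<and> X \<subset> V"

definition mincuts :: "'a set \<Rightarrow> ('a set \<Rightarrow> real) \<Rightarrow> 'a set set set" where
  "mincuts V w = {cut_edges V w X | X. is_shore V X \<and>
      (\<forall>Y. is_shore V Y \<longrightarrow> cut_weight V w X \<le> cut_weight V w Y)}"

text \<open>Characteristic vector of an edge set S, as a real-valued function on edge slots
  (zero outside S; for S a subset of E this is the vector in R^E).\<close>
definition char_vec :: "'a set set \<Rightarrow> 'a set \<Rightarrow> real" where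
  "char_vec S = (\<lambda>e. if e \<in> S then 1 else 0)"

definition fun_scale :: "real \<Rightarrow> ('b \<Rightarrow> real) \<Rightarrow> ('b \<Rightarrow> real)" where
  "fun_scale c f = (\<lambda>x. c * f x)"

definition cdim :: "'a set \<Rightarrow> ('a set \<Rightarrow> real) \<Rightarrow> nat" where
  "cdim V w = vector_space.dim fun_scale (char_vec ` mincuts V w)"

end

theory Submission
  imports Defs
begin

text \<open>Fix a vertex r and describe every mincut by its shore avoiding r. Cut weight is
  submodular: for shores X, Y the excess
  w(\<Delta>(X)) + w(\<Delta>(Y)) - w(\<Delta>(X \<inter> Y)) - w(\<Delta>(X \<union> Y)) is twice the weight of the
  edges between X - Y and Y - X. Hence, if X and Y are minimum shores that cross, then
  X \<inter> Y and X \<union> Y are minimum shores as well, no edge joins X - Y to Y - X, and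
  \<chi>(\<Delta>(X)) + \<chi>(\<Delta>(Y)) = \<chi>(\<Delta>(X \<inter> Y)) + \<chi>(\<Delta>(X \<union> Y)). Uncrossing against a
  maximal laminar family L of minimum shores avoiding r (by induction on the number of
  members of L that X crosses) shows that the vectors of L span all mincut vectors.
  A laminar family of nonempty subsets of the (n - 1)-set V - {r} has at most
  2(n - 1) - 1 = 2n - 3 members.
  Only edges of positive weight enter the cuts.\<close>

definition crosses :: "'a set \<Rightarrow> 'a set \<Rightarrow> bool" where
  "crosses A B \<longleftrightarrow> A \<inter> B \<noteq> {} \<and> \<not> A \<subseteq> B \<and> \<not> B \<subseteq> A"

definition laminar :: "'a set set \<Rightarrow> bool" where
  "laminar F \<longleftrightarrow> (\<forall>A\<in>F. \<forall>B\<in>F. \<not> crosses A B)"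

lemma crosses_sym: "crosses A B \<longleftrightarrow> crosses B A"
  unfolding crosses_def by blast

lemma laminar_insert_iff: "laminar (insert X F) \<longleftrightarrow> laminar F \<and> (\<forall>Y\<in>F. \<not> crosses X Y)"
proof -
  have "\<not> crosses X X" unfolding crosses_def by blast
  then show ?thesis unfolding laminar_def using crosses_sym by blast
qed

lemma laminar_Diff_singleton_image:
  "laminar F \<Longrightarrow> laminar ((\<lambda>S. S - {u}) ` F)"
  unfolding laminar_def crosses_def by blast

subsection \<open>Size of laminar families\<close>

lemma inj_on_Diff_singleton:
  "inj_on (\<lambda>S. S - {u}) {S \<in> F. u \<in> S \<longrightarrow> S - {u} \<notin> F}"
proof (rule inj_onI)
  fix S T
  assume S: "S \<in> {S \<in> F. u \<in> S \<longrightarrow> S - {u} \<notin> F}" and T: "T \<in> {S \<in> F. u \<in> S \<longrightarrow> S - {u} \<notin> F}"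
    and eq: "S - {u} = T - {u}"
  have "u \<in> S \<longleftrightarrow> u \<in> T"
    using S T eq by (metis (no_types, lifting) Diff_empty Diff_insert0 mem_Collect_eq)
  then show "S = T"
    using eq by (metis insert_Diff Diff_empty Diff_insert0)
qed

lemma card_laminar_extensions_le_1:
  assumes lam: "laminar F" and ne: "{} \<notin> F" and fin: "finite F"
  shows "card {S \<in> F. u \<in> S \<and> S - {u} \<in> F} \<le> 1"
proof -
  have "S \<subseteq> T" if S: "S \<in> F" "u \<in> S" "S - {u} \<in> F" and T: "T \<in> F" "u \<in> T" "T - {u} \<in> F" for S T
  proof -
    have "\<not> crosses S T" "\<not> crosses (S - {u}) T"
      using lam S T unfolding laminar_def by blast+
    moreover have "S - {u} \<noteq> {}" "T - {u} \<noteq> {}" using S(3) T(3) ne by metis+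
    ultimately show ?thesis using S(2) T(2) unfolding crosses_def by blast
  qed
  then have "\<forall>S \<in> {S \<in> F. u \<in> S \<and> S - {u} \<in> F}. \<forall>T \<in> {S \<in> F. u \<in> S \<and> S - {u} \<in> F}. S = T"
    by blast
  then show ?thesis using card_le_Suc0_iff_eq[of "{S \<in> F. u \<in> S \<and> S - {u} \<in> F}"] fin by simp
qed

lemma card_laminar_le:
  assumes "finite U" "laminar F" "F \<subseteq> Pow U" "{} \<notin> F"
  shows "card F \<le> 2 * card U - 1"
  using assms
proof (induction U arbitrary: F rule: finite_induct)
  case empty
  then have "F = {}" by auto
  then show ?case by simp
next
  case (insert u U)
  have finF: "finite F"
    using insert.prems(2) insert.hyps(1) by (meson finite_Pow_iff finite_insert rev_finite_subset)
  define F' where "F' = (\<lambda>S. S - {u}) ` F - {{}}"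
  define A where "A = {S \<in> F. u \<in> S \<longrightarrow> S - {u} \<notin> F} - {{u}}"
  define B where "B = {S \<in> F. u \<in> S \<and> S - {u} \<in> F}"
  have "laminar F'"
    using laminar_Diff_singleton_image[OF insert.prems(1)] unfolding F'_def laminar_def by blast
  moreover have "F' \<subseteq> Pow U" using insert.prems(2) unfolding F'_def by auto
  ultimately have IH: "card F' \<le> 2 * card U - 1"
    using insert.IH unfolding F'_def by blast
  have "inj_on (\<lambda>S. S - {u}) A"
    using inj_on_Diff_singleton unfolding A_def by (rule inj_on_subset) blast
  moreover have "(\<lambda>S. S - {u}) ` A \<subseteq> F'"
    unfolding A_def F'_def using insert.prems(3) by (auto dest: subset_singletonD)
  ultimately have cA: "card A \<le> card F'"
    using finF unfolding F'_def by (intro card_inj_on_le) auto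
  have cB: "card B \<le> 1"
    unfolding B_def using card_laminar_extensions_le_1 insert.prems(1,3) finF .
  have "card F \<le> card ({{u}} \<union> A \<union> B)"
    using finF unfolding A_def B_def by (intro card_mono) auto
  also have "\<dots> \<le> 1 + card A + card B"
    using card_Un_le[of "{{u}} \<union> A" B] card_Un_le[of "{{u}}" A] by simp
  finally have cF: "card F \<le> card F' + 2" using cA cB by linarith
  show ?case
  proof (cases "U = {}")
    case True
    then have "F \<subseteq> {{u}}" using insert.prems(2,3) by (auto dest: subset_singletonD)
    then show ?thesis using card_mono[of "{{u}}" F] \<open>U = {}\<close> by simp
  next
    case False
    then have "card U > 0" using insert.hyps(1) by (simp add: card_gt_0_iff)
    then show ?thesis using cF IH insert.hyps by simp
  qed
qed

subsection \<open>Spanning by a maximal laminar subfamily\<close>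

lemma crossing_members_Int_psubset:
  assumes "laminar L" "Y \<in> L" "crosses X Y"
  shows "{Z \<in> L. crosses (X \<inter> Y) Z} \<subset> {Z \<in> L. crosses X Z}"
proof
  have "\<not> crosses Z Y" if "Z \<in> L" for Z using assms that unfolding laminar_def by blast
  then show "{Z \<in> L. crosses (X \<inter> Y) Z} \<subseteq> {Z \<in> L. crosses X Z}"
    using assms(3) unfolding crosses_def by blast
  show "{Z \<in> L. crosses (X \<inter> Y) Z} \<noteq> {Z \<in> L. crosses X Z}"
    using assms(2,3) unfolding crosses_def by blast
qed

lemma crossing_members_Un_psubset:
  assumes "laminar L" "Y \<in> L" "crosses X Y"
  shows "{Z \<in> L. crosses (X \<union> Y) Z} \<subset> {Z \<in> L. crosses X Z}"
proof
  have "\<not> crosses Z Y" if "Z \<in> L" for Z using assms that unfolding laminar_def by blast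
  then show "{Z \<in> L. crosses (X \<union> Y) Z} \<subseteq> {Z \<in> L. crosses X Z}"
    using assms(3) unfolding crosses_def by blast
  show "{Z \<in> L. crosses (X \<union> Y) Z} \<noteq> {Z \<in> L. crosses X Z}"
    using assms(2,3) unfolding crosses_def by blast
qed

lemma span_maximal_laminar_subfamily:
  assumes smul: "module smul" and fin: "finite L" and lam: "laminar L" and sub: "L \<subseteq> C"
    and maximal: "\<And>X. X \<in> C \<Longrightarrow> laminar (insert X L) \<Longrightarrow> X \<in> L"
    and uncross: "\<And>X Y. X \<in> C \<Longrightarrow> Y \<in> C \<Longrightarrow> crosses X Y \<Longrightarrow>
        X \<inter> Y \<in> C \<and> X \<union> Y \<in> C \<and> f X + f Y = f (X \<inter> Y) + f (X \<union> Y)"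
    and "X \<in> C"
  shows "f X \<in> module.span smul (f ` L)"
  using \<open>X \<in> C\<close>
proof (induction "card {Y \<in> L. crosses X Y}" arbitrary: X rule: less_induct)
  case less
  show ?case
  proof (cases "\<exists>Y\<in>L. crosses X Y")
    case True
    then obtain Y where Y: "Y \<in> L" "crosses X Y" by auto
    then have "Y \<in> C" using sub by blast
    then have C: "X \<inter> Y \<in> C" "X \<union> Y \<in> C" and f: "f X = f (X \<inter> Y) + f (X \<union> Y) - f Y"
      using uncross[OF less.prems _ Y(2)] by (simp_all add: eq_diff_eq)
    have "f (X \<inter> Y) \<in> module.span smul (f ` L)"
      using less.hyps[OF psubset_card_mono[OF _ crossing_members_Int_psubset[OF lam Y]] C(1)] fin
      by simp
    moreover have "f (X \<union> Y) \<in> module.span smul (f ` L)"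
      using less.hyps[OF psubset_card_mono[OF _ crossing_members_Un_psubset[OF lam Y]] C(2)] fin
      by simp
    moreover have "f Y \<in> module.span smul (f ` L)"
      using Y(1) module.span_base[OF smul] by blast
    ultimately show ?thesis
      unfolding f by (metis module.span_add[OF smul] module.span_diff[OF smul])
  next
    case False
    then have "laminar (insert X L)" using lam by (simp add: laminar_insert_iff)
    then have "X \<in> L" using maximal less.prems by blast
    then show ?thesis using module.span_base[OF smul] by blast
  qed
qed

lemma exists_maximal_laminar_subfamily:
  assumes "finite C"
  obtains L where "L \<subseteq> C" "laminar L" "\<And>X. X \<in> C \<Longrightarrow> laminar (insert X L) \<Longrightarrow> X \<in> L"
proof -
  let ?Lam = "{L. L \<subseteq> C \<and> laminar L}"
  have "finite ?Lam"
    by (rule finite_subset[of _ "Pow C"]) (use assms in auto)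
  moreover have "{} \<in> ?Lam"
    by (simp add: laminar_def)
  ultimately obtain L where L: "L \<subseteq> C" "laminar L"
    and max: "\<And>L'. L' \<in> ?Lam \<Longrightarrow> L \<subseteq> L' \<Longrightarrow> L = L'"
    by (metis (no_types, lifting) finite_has_maximal mem_Collect_eq empty_iff)
  show thesis
  proof (rule that[OF L])
    fix X assume "X \<in> C" "laminar (insert X L)"
    then have "L = insert X L" using L by (intro max) auto
    then show "X \<in> L" by blast
  qed
qed

subsection \<open>Uncrossing minimum cuts\<close>

definition min_shore :: "'a set \<Rightarrow> ('a set \<Rightarrow> real) \<Rightarrow> 'a set \<Rightarrow> bool" where
  "min_shore V w X \<longleftrightarrow> is_shore V X \<and> (\<forall>Y. is_shore V Y \<longrightarrow> cut_weight V w X \<le> cut_weight V w Y)"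

lemma edgesE:
  assumes "e \<in> edges V w"
  obtains a b where "a \<in> V" "b \<in> V" "w e > 0" "\<And>Z. card (e \<inter> Z) = 1 \<longleftrightarrow> (a \<in> Z \<longleftrightarrow> b \<notin> Z)"
proof -
  from assms obtain a b where ab: "a \<in> V" "b \<in> V" "a \<noteq> b" "e = {a, b}" "w e > 0"
    unfolding edges_def edge_slots_def by blast
  have "card ({a, b} \<inter> Z) = 1 \<longleftrightarrow> (a \<in> Z \<longleftrightarrow> b \<notin> Z)" for Z
    using ab(3) by (cases "a \<in> Z"; cases "b \<in> Z") auto
  then show thesis using that ab by blast
qed

lemma finite_edges: "finite V \<Longrightarrow> finite (edges V w)"
  by (rule finite_subset[of _ "Pow V"]) (auto simp: edges_def edge_slots_def)

lemma cut_weight_Int_Un: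
  assumes "finite V"
  shows "cut_weight V w X + cut_weight V w Y = cut_weight V w (X \<inter> Y) + cut_weight V w (X \<union> Y)
    + 2 * (\<Sum>e\<in>edges V w. if card (e \<inter> (X - Y)) = 1 \<and> card (e \<inter> (Y - X)) = 1 then w e else 0)"
proof -
  define f where "f Z e = (if card (e \<inter> Z) = 1 then w e else 0)" for Z e
  have weight: "cut_weight V w Z = (\<Sum>e\<in>edges V w. f Z e)" for Z
    unfolding cut_weight_def cut_edges_def f_def
    by (simp add: sum.inter_filter[OF finite_edges[OF assms]])
  have "f X e + f Y e = f (X \<inter> Y) e + f (X \<union> Y) e
      + 2 * (if card (e \<inter> (X - Y)) = 1 \<and> card (e \<inter> (Y - X)) = 1 then w e else 0)"
    if "e \<in> edges V w" for e
  proof -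
    obtain a b where "a \<in> V" "b \<in> V" "w e > 0" "\<And>Z. card (e \<inter> Z) = 1 \<longleftrightarrow> (a \<in> Z \<longleftrightarrow> b \<notin> Z)"
      using \<open>e \<in> edges V w\<close> edgesE by metis
    then show ?thesis
      unfolding f_def by (cases "a \<in> X"; cases "b \<in> X"; cases "a \<in> Y"; cases "b \<in> Y") simp_all
  qed
  then show ?thesis
    unfolding weight by (simp add: sum.distrib[symmetric] sum_distrib_left)
qed

lemma min_shore_if_cut_weight_le:
  assumes "min_shore V w X" "is_shore V Z" "cut_weight V w Z \<le> cut_weight V w X"
  shows "min_shore V w Z"
  using assms order_trans unfolding min_shore_def by blast

lemma min_shore_Int_Un:
  assumes fin: "finite V" and X: "min_shore V w X" and Y: "min_shore V w Y"
    and "X \<inter> Y \<noteq> {}" "X \<union> Y \<noteq> V"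
  shows "min_shore V w (X \<inter> Y)" "min_shore V w (X \<union> Y)"
    "\<And>e. e \<in> edges V w \<Longrightarrow> \<not> (card (e \<inter> (X - Y)) = 1 \<and> card (e \<inter> (Y - X)) = 1)"
proof -
  define g where "g e = (if card (e \<inter> (X - Y)) = 1 \<and> card (e \<inter> (Y - X)) = 1 then w e else 0)" for e
  have shores: "is_shore V (X \<inter> Y)" "is_shore V (X \<union> Y)"
    using X Y assms(4,5) unfolding min_shore_def is_shore_def by auto
  then have "cut_weight V w X \<le> cut_weight V w (X \<inter> Y)" "cut_weight V w Y \<le> cut_weight V w (X \<union> Y)"
    using X Y unfolding min_shore_def by auto
  moreover have g_nonneg: "\<And>e. e \<in> edges V w \<Longrightarrow> g e \<ge> 0"
    unfolding g_def edges_def by auto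
  then have "(\<Sum>e\<in>edges V w. g e) \<ge> 0" by (rule sum_nonneg)
  moreover note cut_weight_Int_Un[OF fin, of w X Y, folded g_def]
  ultimately have sum_g: "(\<Sum>e\<in>edges V w. g e) = 0"
    and "cut_weight V w (X \<inter> Y) \<le> cut_weight V w X" "cut_weight V w (X \<union> Y) \<le> cut_weight V w Y"
    by linarith+
  with X Y shores show "min_shore V w (X \<inter> Y)" "min_shore V w (X \<union> Y)"
    by (auto intro: min_shore_if_cut_weight_le)
  show "\<not> (card (e \<inter> (X - Y)) = 1 \<and> card (e \<inter> (Y - X)) = 1)" if "e \<in> edges V w" for e
  proof -
    have "g e = 0"
      using sum_g sum_nonneg_eq_0_iff[OF finite_edges[OF fin]] g_nonneg that by blast
    then show ?thesis using that unfolding g_def edges_def by (auto split: if_splits)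
  qed
qed

lemma char_vec_cut_edges_Int_Un:
  assumes "\<And>e. e \<in> edges V w \<Longrightarrow> \<not> (card (e \<inter> (X - Y)) = 1 \<and> card (e \<inter> (Y - X)) = 1)"
  shows "char_vec (cut_edges V w X) + char_vec (cut_edges V w Y) =
    char_vec (cut_edges V w (X \<inter> Y)) + char_vec (cut_edges V w (X \<union> Y))"
proof
  fix e
  show "(char_vec (cut_edges V w X) + char_vec (cut_edges V w Y)) e =
    (char_vec (cut_edges V w (X \<inter> Y)) + char_vec (cut_edges V w (X \<union> Y))) e"
  proof (cases "e \<in> edges V w")
    case False
    then show ?thesis by (simp add: char_vec_def cut_edges_def)
  next
    case True
    then obtain a b where "a \<in> V" "b \<in> V" "w e > 0"
      and ab: "\<And>Z. card (e \<inter> Z) = 1 \<longleftrightarrow> (a \<in> Z \<longleftrightarrow> b \<notin> Z)"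
      using edgesE by metis
    have "\<not> ((a \<in> X - Y \<longleftrightarrow> b \<notin> X - Y) \<and> (a \<in> Y - X \<longleftrightarrow> b \<notin> Y - X))"
      using assms[OF True] unfolding ab .
    then show ?thesis
      using True unfolding char_vec_def cut_edges_def plus_fun_apply mem_Collect_eq ab
      by (cases "a \<in> X"; cases "b \<in> X"; cases "a \<in> Y"; cases "b \<in> Y") simp_all
  qed
qed

lemma cut_edges_complement:
  assumes "X \<subseteq> V"
  shows "cut_edges V w (V - X) = cut_edges V w X"
  unfolding cut_edges_def
proof (intro Collect_cong conj_cong refl)
  fix e assume "e \<in> edges V w"
  then obtain a b where "a \<in> V" "b \<in> V" "w e > 0"
    and ab: "\<And>Z. card (e \<inter> Z) = 1 \<longleftrightarrow> (a \<in> Z \<longleftrightarrow> b \<notin> Z)"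
    using edgesE by metis
  show "card (e \<inter> (V - X)) = 1 \<longleftrightarrow> card (e \<inter> X) = 1"
    unfolding ab using \<open>a \<in> V\<close> \<open>b \<in> V\<close> by blast
qed

lemma mincuts_avoidingE:
  assumes "r \<in> V" "S \<in> mincuts V w"
  obtains X where "min_shore V w X" "r \<notin> X" "S = cut_edges V w X"
proof -
  from assms(2) obtain X where X: "min_shore V w X" "S = cut_edges V w X"
    unfolding mincuts_def min_shore_def by auto
  then have XV: "X \<subseteq> V" "X \<noteq> {}" "X \<noteq> V" unfolding min_shore_def is_shore_def by auto
  show thesis
  proof (cases "r \<in> X")
    case True
    have "min_shore V w (V - X)"
      using X(1) XV cut_edges_complement[OF XV(1)]
      unfolding min_shore_def is_shore_def cut_weight_def by auto
    with True X(2) cut_edges_complement[OF XV(1)] show thesis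
      by (intro that[of "V - X"]) auto
  qed (use X that in blast)
qed

lemma uncross_min_shores_avoiding:
  assumes "finite V" "r \<in> V"
    and X: "X \<in> {X. min_shore V w X \<and> r \<notin> X}" and Y: "Y \<in> {X. min_shore V w X \<and> r \<notin> X}"
    and "crosses X Y"
  shows "X \<inter> Y \<in> {X. min_shore V w X \<and> r \<notin> X} \<and> X \<union> Y \<in> {X. min_shore V w X \<and> r \<notin> X} \<and>
    char_vec (cut_edges V w X) + char_vec (cut_edges V w Y) =
    char_vec (cut_edges V w (X \<inter> Y)) + char_vec (cut_edges V w (X \<union> Y))"
proof -
  have "X \<inter> Y \<noteq> {}" "X \<union> Y \<noteq> V" using assms(2,5) X Y unfolding crosses_def by auto
  with assms(1) X Y have "min_shore V w (X \<inter> Y)" "min_shore V w (X \<union> Y)"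
    "\<And>e. e \<in> edges V w \<Longrightarrow> \<not> (card (e \<inter> (X - Y)) = 1 \<and> card (e \<inter> (Y - X)) = 1)"
    using min_shore_Int_Un[of V w X Y] by auto
  with X Y show ?thesis by (simp add: char_vec_cut_edges_Int_Un)
qed

lemma vector_space_fun_scale: "vector_space fun_scale"
  unfolding vector_space_def fun_scale_def by (auto simp: fun_eq_iff algebra_simps)

theorem theorem1:
  fixes V :: "'a set" and w :: "'a set \<Rightarrow> real" and n :: nat
  assumes "finite V" and "card V = n" and "n \<ge> 2"
    and "\<And>e. e \<in> edge_slots V \<Longrightarrow> w e \<ge> 0"
  shows "cdim V w \<le> 2 * n - 3"
proof -
  obtain r where r: "r \<in> V" using assms(2,3) by fastforce
  define C where "C = {X. min_shore V w X \<and> r \<notin> X}"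
  define f where "f X = char_vec (cut_edges V w X)" for X
  have C_Pow: "C \<subseteq> Pow (V - {r})" and "{} \<notin> C"
    unfolding C_def min_shore_def is_shore_def by auto
  then have "finite C" using assms(1) by (meson finite_Diff finite_Pow_iff finite_subset)
  then obtain L where L: "L \<subseteq> C" "laminar L" "\<And>X. X \<in> C \<Longrightarrow> laminar (insert X L) \<Longrightarrow> X \<in> L"
    using exists_maximal_laminar_subfamily by blast
  have "finite L" using L(1) \<open>finite C\<close> by (rule finite_subset)
  have smul: "module fun_scale" by (simp add: module_iff_vector_space vector_space_fun_scale)
  have uncross: "X \<inter> Y \<in> C \<and> X \<union> Y \<in> C \<and> f X + f Y = f (X \<inter> Y) + f (X \<union> Y)"
    if "X \<in> C" "Y \<in> C" "crosses X Y" for X Y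
    unfolding C_def f_def by (rule uncross_min_shores_avoiding[OF assms(1) r that[unfolded C_def]])
  note span_C = span_maximal_laminar_subfamily[OF smul \<open>finite L\<close> L(2,1) L(3) uncross]
  have "char_vec ` mincuts V w \<subseteq> module.span fun_scale (f ` L)"
  proof
    fix v assume "v \<in> char_vec ` mincuts V w"
    then obtain S where S: "S \<in> mincuts V w" "v = char_vec S" by blast
    obtain X where "min_shore V w X" "r \<notin> X" "S = cut_edges V w X"
      by (rule mincuts_avoidingE[OF r S(1)])
    then show "v \<in> module.span fun_scale (f ` L)"
      using span_C[of X] S(2) unfolding C_def f_def by simp
  qed
  then have "cdim V w \<le> card (f ` L)"
    unfolding cdim_def using \<open>finite L\<close>
    by (intro vector_space.dim_le_card[OF vector_space_fun_scale]) auto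
  also have "\<dots> \<le> card L" using \<open>finite L\<close> by (rule card_image_le)
  also have "\<dots> \<le> 2 * card (V - {r}) - 1"
    using card_laminar_le[OF _ L(2)] L(1) C_Pow \<open>{} \<notin> C\<close> assms(1) by blast
  finally show ?thesis using assms(1,2) r by simp
qed

end
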